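(* Suppose $(A,V,B)$ satisfies Schur-Weyl duality and $e,f\in B$ are idempotents with $Ve\neq0$, $ef=f$ and $fe=e$. Then the following are equivalent: (1) $(A,Ve,eBe)$ satisfies Schur-Weyl duality; (2) every $eBe$-linear endomorphism of $Ve$ extends to a $B$-linear endomorphism of $V$; (3) $(A,Vf,fBf)$ satisfies Schur-Weyl duality; (4) every $fBf$-linear endomorphism of $Vf$ extends to a $B$-linear endomorphism of $V$.
   Context: $k$ is a field, $A,B$ are $k$-algebras, $V$ an $(A,B)$-bimodule. $(A,V,B)$ satisfies Schur-Weyl duality if the image of $A$ in $\operatorname{End}_k(V)$ (via $a\mapsto(v\mapsto av)$) equals $\operatorname{End}_B(V)$ and the image of $B$ (via $b\mapsto(v\mapsto vb)$) equals $\operatorname{End}_A(V)$. For an idempotent $e$, $Ve$ is an $(A,eBe)$-bimodule. *)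

theory Defs
  imports Main "HOL.Vector_Spaces"
begin

definition k_algebra :: "('k::field \<Rightarrow> 'a::ring_1 \<Rightarrow> 'a) \<Rightarrow> bool" where
  "k_algebra s \<longleftrightarrow> vector_space s \<and>
     (\<forall>c x y. s c (x * y) = s c x * y \<and> s c (x * y) = x * s c y)"

text \<open>(A,B)-bimodule V over k: sV is the k-vector space structure of V,
  la the left A-action, ra the right B-action.\<close>
definition bimodule ::
  "('k::field \<Rightarrow> 'a::ring_1 \<Rightarrow> 'a) \<Rightarrow> ('k \<Rightarrow> 'b::ring_1 \<Rightarrow> 'b) \<Rightarrow>
   ('k \<Rightarrow> 'v::ab_group_add \<Rightarrow> 'v) \<Rightarrow> ('a \<Rightarrow> 'v \<Rightarrow> 'v) \<Rightarrow> ('v \<Rightarrow> 'b \<Rightarrow> 'v) \<Rightarrow> bool" where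
  "bimodule sA sB sV la ra \<longleftrightarrow>
     k_algebra sA \<and> k_algebra sB \<and> vector_space sV \<and>
     (\<forall>x y v. la (x * y) v = la x (la y v)) \<and> (\<forall>v. la 1 v = v) \<and>
     (\<forall>x y v. la (x + y) v = la x v + la y v) \<and>
     (\<forall>x v w. la x (v + w) = la x v + la x w) \<and>
     (\<forall>c x v. la (sA c x) v = sV c (la x v)) \<and>
     (\<forall>c x v. la x (sV c v) = sV c (la x v)) \<and>
     (\<forall>x y v. ra v (x * y) = ra (ra v x) y) \<and> (\<forall>v. ra v 1 = v) \<and>
     (\<forall>x y v. ra v (x + y) = ra v x + ra v y) \<and>
     (\<forall>x v w. ra (v + w) x = ra v x + ra w x) \<and>
     (\<forall>c x v. ra v (sB c x) = sV c (ra v x)) \<and>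
     (\<forall>c x v. ra (sV c v) x = sV c (ra v x)) \<and>
     (\<forall>a b v. la a (ra v b) = ra (la a v) b)"

text \<open>k-linear endomorphisms of the subspace W commuting with the action act
  of all elements of S. Maps are functions on the whole type; only their
  values on W matter.\<close>
definition End_on ::
  "('k::field \<Rightarrow> 'v::ab_group_add \<Rightarrow> 'v) \<Rightarrow> 'v set \<Rightarrow> ('s \<Rightarrow> 'v \<Rightarrow> 'v) \<Rightarrow> 's set \<Rightarrow> ('v \<Rightarrow> 'v) set" where
  "End_on sV W act S = {\<phi>. (\<forall>v\<in>W. \<phi> v \<in> W) \<and>
      (\<forall>v\<in>W. \<forall>w\<in>W. \<phi> (v + w) = \<phi> v + \<phi> w) \<and>
      (\<forall>c. \<forall>v\<in>W. \<phi> (sV c v) = sV c (\<phi> v)) \<and>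
      (\<forall>s\<in>S. \<forall>v\<in>W. \<phi> (act s v) = act s (\<phi> v))}"

definition schur_weyl ::
  "('k::field \<Rightarrow> 'v::ab_group_add \<Rightarrow> 'v) \<Rightarrow> ('a \<Rightarrow> 'v \<Rightarrow> 'v) \<Rightarrow> ('v \<Rightarrow> 'b \<Rightarrow> 'v) \<Rightarrow>
   'a set \<Rightarrow> 'v set \<Rightarrow> 'b set \<Rightarrow> bool" where
  "schur_weyl sV la ra AS W BS \<longleftrightarrow>
     (\<forall>\<phi>. \<phi> \<in> End_on sV W (\<lambda>b v. ra v b) BS \<longleftrightarrow> (\<exists>a\<in>AS. \<forall>v\<in>W. \<phi> v = la a v)) \<and>
     (\<forall>\<phi>. \<phi> \<in> End_on sV W la AS \<longleftrightarrow> (\<exists>b\<in>BS. \<forall>v\<in>W. \<phi> v = ra v b))"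

definition right_cut :: "('v \<Rightarrow> 'b \<Rightarrow> 'v) \<Rightarrow> 'b \<Rightarrow> 'v set" where
  "right_cut ra e = {ra v e | v. True}"

definition corner :: "'b::ring_1 \<Rightarrow> 'b set" where
  "corner e = {e * b * e | b. True}"

definition extends_prop ::
  "('k::field \<Rightarrow> 'v::ab_group_add \<Rightarrow> 'v) \<Rightarrow> ('v \<Rightarrow> 'b::ring_1 \<Rightarrow> 'v) \<Rightarrow> 'b \<Rightarrow> bool" where
  "extends_prop sV ra e \<longleftrightarrow>
     (\<forall>\<phi>\<in>End_on sV (right_cut ra e) (\<lambda>b v. ra v b) (corner e).
        \<exists>\<psi>\<in>End_on sV UNIV (\<lambda>b v. ra v b) UNIV. \<forall>v\<in>right_cut ra e. \<psi> v = \<phi> v)"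

end

theory Submission
  imports Defs
begin

text \<open>For an idempotent e, the subspace Ve is a direct summand of V, and an
  A-linear endomorphism of Ve extends to V by precomposing with v \<mapsto> ve; so the
  centralizer half of Schur-Weyl duality always passes from V to Ve, and the
  remaining half is exactly the extension property. When ef = f and fe = e,
  right multiplication by f and by e are mutually inverse isomorphisms Ve \<cong> Vf
  which conjugate eBe-linear maps into fBf-linear ones, so the extension
  properties for e and f are equivalent.\<close>

lemma End_on_maps_into: "\<phi> \<in> End_on sV W act S \<Longrightarrow> v \<in> W \<Longrightarrow> \<phi> v \<in> W"
  unfolding End_on_def by blast

lemma End_on_commutes:
  "\<phi> \<in> End_on sV W act S \<Longrightarrow> s \<in> S \<Longrightarrow> v \<in> W \<Longrightarrow> \<phi> (act s v) = act s (\<phi> v)"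
  unfolding End_on_def by blast

lemma idempotents_of_mutual_absorption:
  fixes e f :: "'b::ring_1"
  assumes "e * f = f" and "f * e = e"
  shows "e * e = e"
proof -
  have "e * e = e * (f * e)" using assms(2) by simp
  also have "\<dots> = f * e" using assms(1) by (simp add: mult.assoc[symmetric])
  finally show ?thesis using assms(2) by simp
qed

locale bimod =
  fixes sA :: "'k::field \<Rightarrow> 'a::ring_1 \<Rightarrow> 'a"
    and sB :: "'k \<Rightarrow> 'b::ring_1 \<Rightarrow> 'b"
    and sV :: "'k \<Rightarrow> 'v::ab_group_add \<Rightarrow> 'v"
    and la :: "'a \<Rightarrow> 'v \<Rightarrow> 'v"
    and ra :: "'v \<Rightarrow> 'b \<Rightarrow> 'v"
  assumes bimodule: "bimodule sA sB sV la ra"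
begin

lemma right_act_mult: "ra v (x * y) = ra (ra v x) y"
  and right_act_add: "ra (v + w) x = ra v x + ra w x"
  and right_act_scale: "ra (sV c v) x = sV c (ra v x)"
  and left_act_add: "la a (v + w) = la a v + la a w"
  and left_act_scale: "la a (sV c v) = sV c (la a v)"
  and left_right_act_commute: "la a (ra v b) = ra (la a v) b"
  using bimodule unfolding bimodule_def by auto

lemma right_cut_mem: "ra v e \<in> right_cut ra e"
  by (auto simp: right_cut_def)

lemma right_cut_fixed: "e * e = e \<Longrightarrow> u \<in> right_cut ra e \<Longrightarrow> ra u e = u"
  by (auto simp: right_cut_def right_act_mult[symmetric])

lemma right_cut_add: "u \<in> right_cut ra e \<Longrightarrow> w \<in> right_cut ra e \<Longrightarrow> u + w \<in> right_cut ra e"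
  by (auto simp: right_cut_def right_act_add[symmetric])

lemma right_cut_scale: "u \<in> right_cut ra e \<Longrightarrow> sV c u \<in> right_cut ra e"
  by (auto simp: right_cut_def right_act_scale[symmetric])

lemma right_cut_left_act: "u \<in> right_cut ra e \<Longrightarrow> la a u \<in> right_cut ra e"
  by (auto simp: right_cut_def left_right_act_commute)

lemma right_cut_corner_act:
  assumes "u \<in> right_cut ra e" and "s \<in> corner e"
  shows "ra u s \<in> right_cut ra e"
proof -
  obtain v b where "u = ra v e" "s = e * b * e"
    using assms by (auto simp: right_cut_def corner_def)
  then have "ra u s = ra (ra v (e * e * b)) e" by (simp add: right_act_mult)
  then show ?thesis by (simp add: right_cut_mem)
qed

lemmas right_cut_closure =
  right_cut_add right_cut_scale right_cut_left_act right_cut_corner_act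

lemma left_act_End_on:
  "la a \<in> End_on sV UNIV (\<lambda>b v. ra v b) UNIV"
  unfolding End_on_def by (simp add: left_act_add left_act_scale left_right_act_commute)

lemma left_act_End_on_right_cut:
  assumes "\<forall>v\<in>right_cut ra e. \<phi> v = la a v"
  shows "\<phi> \<in> End_on sV (right_cut ra e) (\<lambda>b v. ra v b) (corner e)"
  using assms unfolding End_on_def
  by (auto simp: right_cut_closure left_act_add left_act_scale left_right_act_commute)

lemma corner_act_End_on_right_cut:
  assumes "\<forall>v\<in>right_cut ra e. \<phi> v = ra v b" and "b \<in> corner e"
  shows "\<phi> \<in> End_on sV (right_cut ra e) la UNIV"
  using assms unfolding End_on_def
  by (auto simp: right_cut_closure right_act_add right_act_scale left_right_act_commute)

lemma End_on_right_cut_is_corner_act: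
  assumes sw: "schur_weyl sV la ra UNIV UNIV UNIV" and ee: "e * e = e"
    and \<phi>: "\<phi> \<in> End_on sV (right_cut ra e) la UNIV"
  shows "\<exists>b\<in>corner e. \<forall>v\<in>right_cut ra e. \<phi> v = ra v b"
proof -
  let ?W = "right_cut ra e"
  define \<psi> where "\<psi> v = \<phi> (ra v e)" for v
  have "\<psi> \<in> End_on sV UNIV la UNIV"
    using \<phi> unfolding End_on_def \<psi>_def
    by (auto simp: right_cut_mem right_act_add right_act_scale left_right_act_commute[symmetric])
  then obtain b where b: "\<forall>v. \<psi> v = ra v b"
    using sw unfolding schur_weyl_def by blast
  have "\<phi> w = ra w (e * b * e)" if w: "w \<in> ?W" for w
  proof -
    have \<phi>w: "\<phi> w = ra w b" using b right_cut_fixed[OF ee w] unfolding \<psi>_def by metis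
    have "\<phi> w = ra (\<phi> w) e" using right_cut_fixed[OF ee End_on_maps_into[OF \<phi> w]] by simp
    also have "\<dots> = ra (ra (ra w e) b) e" using \<phi>w right_cut_fixed[OF ee w] by simp
    finally show ?thesis by (simp add: right_act_mult)
  qed
  moreover have "e * b * e \<in> corner e" by (auto simp: corner_def)
  ultimately show ?thesis by blast
qed

lemma schur_weyl_right_cut_iff_extends:
  assumes sw: "schur_weyl sV la ra UNIV UNIV UNIV" and ee: "e * e = e"
  shows "schur_weyl sV la ra UNIV (right_cut ra e) (corner e) \<longleftrightarrow> extends_prop sV ra e"
proof -
  let ?W = "right_cut ra e"
  let ?End = "End_on sV ?W (\<lambda>b v. ra v b) (corner e)"
  have centralizer: "\<phi> \<in> End_on sV ?W la UNIV \<longleftrightarrow> (\<exists>b\<in>corner e. \<forall>v\<in>?W. \<phi> v = ra v b)"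
    for \<phi>
    using End_on_right_cut_is_corner_act[OF sw ee] corner_act_End_on_right_cut by blast
  have restriction: "(\<exists>a. \<forall>v\<in>?W. \<phi> v = la a v) \<longleftrightarrow>
      (\<exists>\<psi>\<in>End_on sV UNIV (\<lambda>b v. ra v b) UNIV. \<forall>v\<in>?W. \<psi> v = \<phi> v)" for \<phi>
  proof
    assume "\<exists>a. \<forall>v\<in>?W. \<phi> v = la a v"
    then obtain a where "\<forall>v\<in>?W. \<phi> v = la a v" ..
    then have "\<forall>v\<in>?W. la a v = \<phi> v" by simp
    with left_act_End_on show "\<exists>\<psi>\<in>End_on sV UNIV (\<lambda>b v. ra v b) UNIV. \<forall>v\<in>?W. \<psi> v = \<phi> v"
      by blast
  next
    assume "\<exists>\<psi>\<in>End_on sV UNIV (\<lambda>b v. ra v b) UNIV. \<forall>v\<in>?W. \<psi> v = \<phi> v"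
    then obtain \<psi> where \<psi>: "\<psi> \<in> End_on sV UNIV (\<lambda>b v. ra v b) UNIV"
      and \<psi>_\<phi>: "\<forall>v\<in>?W. \<psi> v = \<phi> v" by blast
    obtain a where "\<forall>v. \<psi> v = la a v"
      using \<psi> sw unfolding schur_weyl_def by blast
    with \<psi>_\<phi> show "\<exists>a. \<forall>v\<in>?W. \<phi> v = la a v" by metis
  qed
  have "schur_weyl sV la ra UNIV ?W (corner e) \<longleftrightarrow> (\<forall>\<phi>\<in>?End. \<exists>a. \<forall>v\<in>?W. \<phi> v = la a v)"
    unfolding schur_weyl_def
    using centralizer left_act_End_on_right_cut by (simp add: Ball_def) blast
  also have "\<dots> \<longleftrightarrow> extends_prop sV ra e"
    unfolding extends_prop_def using restriction by simp
  finally show ?thesis .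
qed

lemma End_on_right_cut_conjugate:
  assumes ef: "e * f = f" and fe: "f * e = e"
    and \<phi>: "\<phi> \<in> End_on sV (right_cut ra f) (\<lambda>b v. ra v b) (corner f)"
  shows "(\<lambda>w. ra (\<phi> (ra w f)) e) \<in> End_on sV (right_cut ra e) (\<lambda>b v. ra v b) (corner e)"
proof -
  have ee: "e * e = e" and ff: "f * f = f"
    using idempotents_of_mutual_absorption ef fe by blast+
  have efe: "e * f * e = e" by (simp add: ef fe ee)
  have commutes: "ra (\<phi> (ra (ra w s) f)) e = ra (ra (\<phi> (ra w f)) e) s"
    if s: "s \<in> corner e" for w s
  proof -
    obtain b where sb: "s = e * b * e" using s by (auto simp: corner_def)
    let ?t = "f * (e * b * e) * f"
    have t: "?t \<in> corner f" by (auto simp: corner_def)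
    have "f * ?t = e * b * e * f"
      using ff fe by (metis mult.assoc)
    then have "ra (ra w s) f = ra (ra w f) ?t"
      by (simp add: sb right_act_mult[symmetric] mult.assoc)
    then have "ra (\<phi> (ra (ra w s) f)) e = ra (\<phi> (ra w f)) (?t * e)"
      using End_on_commutes[OF \<phi> t right_cut_mem] by (simp add: right_act_mult)
    also have "?t * e = (f * e) * b * (e * f * e)" by (simp add: mult.assoc)
    also have "\<dots> = e * (e * b * e)" using efe fe ee by (simp add: mult.assoc[symmetric])
    finally show ?thesis by (simp add: sb right_act_mult)
  qed
  show ?thesis
    using \<phi> commutes unfolding End_on_def
    by (simp add: right_cut_mem right_act_add right_act_scale)
qed

lemma extends_prop_transfer:
  assumes ef: "e * f = f" and fe: "f * e = e" and ext: "extends_prop sV ra e"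
  shows "extends_prop sV ra f"
  unfolding extends_prop_def
proof
  fix \<phi> assume \<phi>: "\<phi> \<in> End_on sV (right_cut ra f) (\<lambda>b v. ra v b) (corner f)"
  obtain \<psi> where \<psi>: "\<psi> \<in> End_on sV UNIV (\<lambda>b v. ra v b) UNIV"
      and \<psi>_ext: "\<forall>w\<in>right_cut ra e. \<psi> w = ra (\<phi> (ra w f)) e"
    using bspec[OF ext[unfolded extends_prop_def] End_on_right_cut_conjugate[OF ef fe \<phi>]]
    by blast
  have ff: "f * f = f" using idempotents_of_mutual_absorption ef fe by blast
  have round_trip: "ra (ra u e) f = u" if "u \<in> right_cut ra f" for u
    by (simp add: right_act_mult[symmetric] ef right_cut_fixed[OF ff that])
  have "\<psi> u = \<phi> u" if u: "u \<in> right_cut ra f" for u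
  proof -
    have "\<psi> u = ra (\<psi> (ra u e)) f"
      using round_trip[OF u] End_on_commutes[OF \<psi>, of f "ra u e"] by simp
    also have "\<dots> = ra (ra (\<phi> u) e) f"
      using \<psi>_ext right_cut_mem round_trip[OF u] by simp
    also have "\<dots> = \<phi> u" using round_trip End_on_maps_into[OF \<phi> u] by simp
    finally show ?thesis .
  qed
  with \<psi> show "\<exists>\<psi>\<in>End_on sV UNIV (\<lambda>b v. ra v b) UNIV. \<forall>v\<in>right_cut ra f. \<psi> v = \<phi> v"
    by blast
qed

end

theorem mainTheorem8:
  fixes sA :: "'k::field \<Rightarrow> 'a::ring_1 \<Rightarrow> 'a"
    and sB :: "'k \<Rightarrow> 'b::ring_1 \<Rightarrow> 'b"
    and sV :: "'k \<Rightarrow> 'v::ab_group_add \<Rightarrow> 'v"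
    and la :: "'a \<Rightarrow> 'v \<Rightarrow> 'v"
    and ra :: "'v \<Rightarrow> 'b \<Rightarrow> 'v"
    and e f :: 'b
  assumes "bimodule sA sB sV la ra"
    and "schur_weyl sV la ra UNIV UNIV UNIV"
    and "e * e = e" and "f * f = f"
    and "right_cut ra e \<noteq> {0}"
    and "e * f = f" and "f * e = e"
  shows "(schur_weyl sV la ra UNIV (right_cut ra e) (corner e) \<longleftrightarrow> extends_prop sV ra e)
       \<and> (extends_prop sV ra e \<longleftrightarrow> schur_weyl sV la ra UNIV (right_cut ra f) (corner f))
       \<and> (schur_weyl sV la ra UNIV (right_cut ra f) (corner f) \<longleftrightarrow> extends_prop sV ra f)"
proof -
  interpret bimod sA sB sV la ra by (rule bimod.intro) (rule assms(1))
  have "extends_prop sV ra e \<longleftrightarrow> extends_prop sV ra f"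
    using extends_prop_transfer[OF assms(6,7)] extends_prop_transfer[OF assms(7,6)] by blast
  then show ?thesis
    using schur_weyl_right_cut_iff_extends[OF assms(2) assms(3)]
      schur_weyl_right_cut_iff_extends[OF assms(2) assms(4)] by blast
qed

end
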